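(* Let $f$ be analytic in the open unit disk $D$ and let $\varepsilon\in(0,1)$. Then there is a constant $C(f,\varepsilon)>0$, depending only on $f$ and $\varepsilon$, such that for every $x\in(0,1)$, every integer $n\ge n_0(x)$, and every $z$ with $|z|\le(1-\varepsilon)x$, \[ |r_n(f;z)|\le C(f,\varepsilon)\,\frac{(1-\varepsilon/2)^{2n}\,x^{2n+1}}{(1-x)^{2n+2}}\cdot\frac{(n!)^2}{((2n)!)^2}. \]
   Context: For $n\ge1$ let $y_n(z)=\sum_{k=0}^{n}\frac{(n+k)!}{(n-k)!\,k!}\left(\frac{z}{2}\right)^k$ be the $n$-th Bessel polynomial and let $\alpha_{n1},\dots,\alpha_{nn}$ be its zeros (they are simple). Put $a_{nk}=1-\alpha_{nk}/2$ and $b_{nk}=1+\alpha_{nk}/2$ for $k=1,\dots,n$. For $f$ analytic where needed define $r_n(f;z)=zf'(z)-\sum_{k=1}^n\big(f(a_{nk}z)-f(b_{nk}z)\big)$. For $x\in(0,1)$ put $n_0(x)=\max\{14,\;x^2(1-x)^{-2}\}-1$. *)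

theory Defs
  imports "HOL-Analysis.Analysis" "HOL-Computational_Algebra.Polynomial"
begin

definition bessel_poly :: "nat \<Rightarrow> complex poly" where
  "bessel_poly n = (\<Sum>k\<le>n. monom (of_nat (fact (n+k)) / (of_nat (fact (n-k)) * of_nat (fact k)) / 2 ^ k) k)"

text \<open>The set of zeros of y_n (they are simple, so summing over this set is summing over k = 1..n).\<close>
definition bessel_zeros :: "nat \<Rightarrow> complex set" where
  "bessel_zeros n = {\<alpha>. poly (bessel_poly n) \<alpha> = 0}"

definition r_n :: "nat \<Rightarrow> (complex \<Rightarrow> complex) \<Rightarrow> complex \<Rightarrow> complex" where
  "r_n n f z = z * deriv f z
     - (\<Sum>\<alpha>\<in>bessel_zeros n. f ((1 - \<alpha>/2) * z) - f ((1 + \<alpha>/2) * z))"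

definition n0 :: "real \<Rightarrow> real" where
  "n0 x = max 14 (x^2 / (1-x)^2) - 1"

end

theory Submission
  imports Defs "HOL-Complex_Analysis.Cauchy_Integral_Formula"
    "HOL-Computational_Algebra.Fundamental_Theorem_Algebra"
begin

text \<open>
  Write Y(u) = y_n(2u). It satisfies u^2 Y'' + (2u + 1) Y' = n(n + 1) Y, and therefore
  u^2 (Y'(u) Y(-u) + Y(u) Y'(-u)) + Y(u) Y(-u) = 1. Consequently the zeros b of Y are simple and
  1/v^2 - \<Sum>_b (1/(v + b) - 1/(v - b)) = 1/(v^2 Y(v) Y(-v)).
  Cauchy's formula for \<phi>(t) = f(t z) on the circle |t - 1| = \<rho> turns 2\<pi>i r_n(f;z) into the integral of
  \<phi>(t) against this kernel at v = t - 1. Evaluating the differential equation at a zero of maximal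
  modulus gives |b| \<le> 1/(n + 1), hence |Y(v)| \<ge> (2n)!/n! (|v| - 1/(n + 1))^n, and the radius
  \<rho> = (1 - \<epsilon>/4)/((1 - \<epsilon>) x) - 1 produces the stated bound.
\<close>

section \<open>The Bessel polynomial y_n(2u)\<close>

definition bessel_coeff :: "nat \<Rightarrow> nat \<Rightarrow> complex" where
  "bessel_coeff n k = of_nat (fact (n+k)) / (of_nat (fact (n-k)) * of_nat (fact k))"

definition scaled_bessel_poly :: "nat \<Rightarrow> complex poly" where
  "scaled_bessel_poly n = (\<Sum>k\<le>n. monom (bessel_coeff n k) k)"

definition scaled_bessel_roots :: "nat \<Rightarrow> complex set" where
  "scaled_bessel_roots n = {b. poly (scaled_bessel_poly n) b = 0}"

lemma coeff_scaled_bessel_poly: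
  "coeff (scaled_bessel_poly n) k = (if k \<le> n then bessel_coeff n k else 0)"
  unfolding scaled_bessel_poly_def by (auto simp: coeff_sum coeff_monom)

lemma poly_bessel_poly_double: "poly (bessel_poly n) (2*u) = poly (scaled_bessel_poly n) u"
  unfolding bessel_poly_def scaled_bessel_poly_def bessel_coeff_def
  by (auto simp: poly_sum poly_monom power_mult_distrib intro!: sum.cong)

lemma bessel_coeff_0 [simp]: "bessel_coeff n 0 = 1"
  by (simp add: bessel_coeff_def)

lemma bessel_coeff_diag: "bessel_coeff n n = of_real (fact (2*n) / fact n)"
  by (simp add: bessel_coeff_def mult_2)

lemma bessel_coeff_Suc:
  assumes "k < n"
  shows "of_nat (Suc k) * bessel_coeff n (Suc k) = of_nat (n-k) * of_nat (n+k+1) * bessel_coeff n k"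
proof -
  have fact_diff: "fact (n-k) = of_nat (n-k) * (fact (n - Suc k) :: complex)"
    using assms by (metis Suc_diff_Suc fact_Suc of_nat_fact)
  have fact_sum: "fact (n + Suc k) = of_nat (n+k+1) * (fact (n + k) :: complex)"
    by (metis add_Suc_right fact_Suc of_nat_fact Suc_eq_plus1)
  have fact_Suc_k: "fact (Suc k) = of_nat (Suc k) * (fact k :: complex)"
    by simp
  have "(of_nat (n-k) :: complex) \<noteq> 0" "(fact k :: complex) \<noteq> 0" "(fact (n - Suc k) :: complex) \<noteq> 0"
    using assms by auto
  then show ?thesis
    unfolding bessel_coeff_def of_nat_fact fact_diff fact_sum fact_Suc_k
    by (simp add: field_simps del: fact_Suc of_nat_Suc)
qed

lemma coeff_scaled_bessel_poly_rec:
  "of_nat (j*(j+1)) * coeff (scaled_bessel_poly n) j + of_nat (Suc j) * coeff (scaled_bessel_poly n) (Suc j)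
     = of_nat (n*(n+1)) * coeff (scaled_bessel_poly n) j"
proof (cases "j < n")
  case True
  then show ?thesis
    using bessel_coeff_Suc[OF True] by (simp add: coeff_scaled_bessel_poly of_nat_diff algebra_simps)
next
  case False
  then show ?thesis by (cases "j = n") (auto simp: coeff_scaled_bessel_poly)
qed

lemma scaled_bessel_poly_ode:
  "monom 1 2 * pderiv (pderiv (scaled_bessel_poly n)) + [:1, 2:] * pderiv (scaled_bessel_poly n)
     = smult (of_nat (n*(n+1))) (scaled_bessel_poly n)"
proof (rule poly_eqI)
  fix j
  have coeff_mult_monom: "coeff (p * monom c m) k = (if k < m then 0 else c * coeff p (k - m))"
    for p :: "complex poly" and c m k
    by (simp add: mult.commute[of p] coeff_monom_mult)
  consider "j = 0" | "j = 1" | i where "j = Suc (Suc i)"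
    by (metis One_nat_def not0_implies_Suc)
  then show "coeff (monom 1 2 * pderiv (pderiv (scaled_bessel_poly n)) + [:1, 2:] * pderiv (scaled_bessel_poly n)) j
      = coeff (smult (of_nat (n*(n+1))) (scaled_bessel_poly n)) j"
    using coeff_scaled_bessel_poly_rec[of j n]
    by cases (simp_all add: coeff_monom_mult coeff_pderiv coeff_mult_monom algebra_simps)
qed

lemma poly_scaled_bessel_ode:
  "u^2 * poly (pderiv (pderiv (scaled_bessel_poly n))) u + (2*u + 1) * poly (pderiv (scaled_bessel_poly n)) u
     = of_nat (n*(n+1)) * poly (scaled_bessel_poly n) u"
  using arg_cong[OF scaled_bessel_poly_ode, of "\<lambda>p. poly p u"] by (simp add: poly_monom algebra_simps)

lemma poly_reflect_has_field_derivative: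
  "((\<lambda>u. poly p (-u)) has_field_derivative - poly (pderiv p) (-u)) (at u)"
proof -
  have "((\<lambda>u. poly p (-u)) has_field_derivative poly (pderiv p) (-u) * (-1)) (at u)"
    by (rule DERIV_chain2[where f="poly p" and g=uminus]) (auto intro: derivative_eq_intros)
  then show ?thesis
    by simp
qed

lemma reflected_wronskian_const:
  fixes p :: "complex poly"
  assumes ode: "\<And>u. u^2 * poly (pderiv (pderiv p)) u + (2*u + 1) * poly (pderiv p) u = c * poly p u"
  shows "u^2 * (poly (pderiv p) u * poly p (-u) + poly p u * poly (pderiv p) (-u)) + poly p u * poly p (-u)
           = poly p 0 ^ 2"
proof -
  define Y where "Y = poly p"
  define Y1 where "Y1 = poly (pderiv p)"
  define Y2 where "Y2 = poly (pderiv (pderiv p))"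
  define W where "W = (\<lambda>u. u^2 * (Y1 u * Y (-u) + Y u * Y1 (-u)) + Y u * Y (-u))"
  have "(W has_field_derivative
          Y (-u) * (u^2 * Y2 u + (2*u + 1) * Y1 u) - Y u * ((-u)^2 * Y2 (-u) + (2*(-u) + 1) * Y1 (-u)))
          (at u within UNIV)" for u
    unfolding W_def Y_def Y1_def Y2_def
    by (rule derivative_eq_intros poly_reflect_has_field_derivative refl | simp)+
       (simp add: algebra_simps power2_eq_square)
  moreover have "Y (-u) * (u^2 * Y2 u + (2*u + 1) * Y1 u) - Y u * ((-u)^2 * Y2 (-u) + (2*(-u) + 1) * Y1 (-u)) = 0"
    for u
    unfolding Y_def Y1_def Y2_def ode by simp
  ultimately obtain k where "\<forall>u\<in>UNIV. W u = k"
    using has_field_derivative_zero_constant[of UNIV W] by auto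
  then have "W u = W 0"
    by simp
  then show ?thesis
    by (simp add: W_def Y_def Y1_def power2_eq_square)
qed

lemma scaled_bessel_wronskian:
  "u^2 * (poly (pderiv (scaled_bessel_poly n)) u * poly (scaled_bessel_poly n) (-u)
           + poly (scaled_bessel_poly n) u * poly (pderiv (scaled_bessel_poly n)) (-u))
     + poly (scaled_bessel_poly n) u * poly (scaled_bessel_poly n) (-u) = 1"
  using reflected_wronskian_const[OF poly_scaled_bessel_ode]
  by (simp add: poly_0_coeff_0 coeff_scaled_bessel_poly)

section \<open>Zeros of y_n(2u)\<close>

lemma scaled_bessel_root_simple:
  assumes "poly (scaled_bessel_poly n) b = 0"
  shows "b \<noteq> 0" "poly (pderiv (scaled_bessel_poly n)) b \<noteq> 0"
  using scaled_bessel_wronskian[of b n] assms by auto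

lemma scaled_bessel_poly_nonzero: "scaled_bessel_poly n \<noteq> 0"
  using coeff_scaled_bessel_poly[of n 0] by auto

lemma degree_scaled_bessel_poly: "degree (scaled_bessel_poly n) = n"
proof (rule antisym)
  show "degree (scaled_bessel_poly n) \<le> n"
    by (rule degree_le) (auto simp: coeff_scaled_bessel_poly)
  show "n \<le> degree (scaled_bessel_poly n)"
    by (rule le_degree) (simp add: coeff_scaled_bessel_poly bessel_coeff_diag)
qed

lemma finite_scaled_bessel_roots: "finite (scaled_bessel_roots n)"
  unfolding scaled_bessel_roots_def using scaled_bessel_poly_nonzero poly_roots_finite by blast

lemma scaled_bessel_poly_factor:
  "scaled_bessel_poly n = smult (bessel_coeff n n) (\<Prod>b\<in>scaled_bessel_roots n. [:-b, 1:])"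
proof -
  have "rsquarefree (scaled_bessel_poly n)"
    unfolding rsquarefree_roots using scaled_bessel_root_simple(2) by blast
  from complex_poly_decompose_rsquarefree[OF this] show ?thesis
    by (simp add: scaled_bessel_roots_def degree_scaled_bessel_poly coeff_scaled_bessel_poly)
qed

lemma card_scaled_bessel_roots: "card (scaled_bessel_roots n) = n"
proof -
  have "n = degree (\<Prod>b\<in>scaled_bessel_roots n. [:-b, 1:])"
    using scaled_bessel_poly_factor[of n] degree_scaled_bessel_poly[of n]
    by (simp add: bessel_coeff_diag)
  also have "\<dots> = card (scaled_bessel_roots n)"
    by (simp add: degree_prod_sum_eq)
  finally show ?thesis by simp
qed

lemma poly_pderiv_prod_linear:
  fixes u :: "'a :: field"
  assumes "finite S" "u \<notin> S"
  shows "poly (pderiv (\<Prod>s\<in>S. [:-s, 1:])) u = poly (\<Prod>s\<in>S. [:-s, 1:]) u * (\<Sum>s\<in>S. 1/(u - s))"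
proof -
  have "poly (pderiv (\<Prod>s\<in>S. [:-s, 1:])) u = (\<Sum>a\<in>S. \<Prod>s\<in>S-{a}. u - s)"
    by (simp add: pderiv_prod pderiv_pCons poly_sum poly_prod)
  also have "\<dots> = (\<Sum>a\<in>S. (\<Prod>s\<in>S. u - s) * (1/(u - a)))"
  proof (rule sum.cong[OF refl])
    fix a assume "a \<in> S"
    then have "(\<Prod>s\<in>S. u - s) = (u - a) * (\<Prod>s\<in>S-{a}. u - s)" "u - a \<noteq> 0"
      using assms by (auto simp: prod.remove)
    then show "(\<Prod>s\<in>S-{a}. u - s) = (\<Prod>s\<in>S. u - s) * (1/(u - a))"
      by simp
  qed
  finally show ?thesis
    by (simp add: poly_prod sum_distrib_left)
qed

lemma poly_pderiv_scaled_bessel: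
  assumes "u \<notin> scaled_bessel_roots n"
  shows "poly (pderiv (scaled_bessel_poly n)) u
           = poly (scaled_bessel_poly n) u * (\<Sum>b\<in>scaled_bessel_roots n. 1/(u - b))"
  using poly_pderiv_prod_linear[OF finite_scaled_bessel_roots assms]
  by (subst (1 2) scaled_bessel_poly_factor) (simp add: pderiv_smult)

lemma scaled_bessel_root_sum:
  assumes b0: "b0 \<in> scaled_bessel_roots n"
  shows "(\<Sum>b\<in>scaled_bessel_roots n - {b0}. b0/(b0 - b)) = -1 - 1/(2*b0)"
proof -
  define S where "S = scaled_bessel_roots n - {b0}"
  define Q where "Q = smult (bessel_coeff n n) (\<Prod>b\<in>S. [:-b, 1:])"
  define \<sigma> where "\<sigma> = (\<Sum>b\<in>S. 1/(b0 - b))"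
  have Y: "scaled_bessel_poly n = [:-b0, 1:] * Q"
    unfolding Q_def S_def using b0 finite_scaled_bessel_roots
    by (subst scaled_bessel_poly_factor) (simp add: prod.remove[of _ b0] mult_ac)
  have lin: "pderiv [:-b0, 1:] = 1"
    by (simp add: pderiv_pCons)
  have Y1: "poly (pderiv (scaled_bessel_poly n)) b0 = poly Q b0"
    unfolding Y pderiv_mult lin by simp
  have "poly (pderiv Q) b0 = poly Q b0 * \<sigma>"
    using poly_pderiv_prod_linear[of S b0] finite_scaled_bessel_roots
    by (simp add: pderiv_smult Q_def S_def \<sigma>_def)
  then have Y2: "poly (pderiv (pderiv (scaled_bessel_poly n))) b0 = 2 * poly Q b0 * \<sigma>"
    unfolding Y pderiv_mult lin pderiv_add pderiv_1 by simp
  have root: "poly (scaled_bessel_poly n) b0 = 0"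
    using b0 by (simp add: scaled_bessel_roots_def)
  have "poly Q b0 \<noteq> 0" and "b0 \<noteq> 0"
    using scaled_bessel_root_simple[OF root] Y1 by auto
  moreover have "poly Q b0 * (2 * b0^2 * \<sigma> + (2*b0 + 1)) = 0"
    using poly_scaled_bessel_ode[of b0 n] root Y1 Y2 by (simp add: algebra_simps)
  ultimately have "2 * b0^2 * \<sigma> = -(2*b0 + 1)"
    by (simp add: add_eq_0_iff)
  then have "b0 * \<sigma> = -(2*b0 + 1) / (2*b0)"
    using \<open>b0 \<noteq> 0\<close> by (simp add: field_simps power2_eq_square)
  also have "\<dots> = -1 - 1/(2*b0)"
    using \<open>b0 \<noteq> 0\<close> by (simp add: field_simps)
  finally show ?thesis
    by (simp add: S_def \<sigma>_def sum_distrib_left)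
qed

lemma Re_divide_diff_ge_half:
  fixes b c :: complex
  assumes "norm c \<le> norm b" "c \<noteq> b"
  shows "1/2 \<le> Re (b/(b - c))"
proof -
  have "(cmod c)^2 \<le> (cmod b)^2"
    using assms(1) by (simp add: power_mono)
  then have "(Re c)^2 + (Im c)^2 \<le> (Re b)^2 + (Im b)^2"
    by (simp add: cmod_power2)
  then have "(cmod (b - c))^2 \<le> 2 * (Re b * Re (b - c) + Im b * Im (b - c))"
    unfolding cmod_power2 by (simp add: power2_eq_square algebra_simps)
  moreover have "(cmod (b - c))^2 > 0"
    using assms(2) by simp
  ultimately show ?thesis
    by (simp add: Re_divide cmod_power2 field_simps)
qed

text \<open>At a zero b0 of maximal modulus every term of the root sum has real part at least 1/2,
  so (n - 1)/2 \<le> -1 - Re (1/b0)/2.\<close>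
lemma norm_scaled_bessel_root_le:
  assumes "b \<in> scaled_bessel_roots n"
  shows "norm b \<le> 1 / (real n + 1)"
proof -
  define R where "R = scaled_bessel_roots n"
  have "finite R" "R \<noteq> {}"
    using finite_scaled_bessel_roots assms by (auto simp: R_def)
  then have "Max (norm ` R) \<in> norm ` R"
    by simp
  then obtain b0 where b0: "b0 \<in> R" and "norm b0 = Max (norm ` R)"
    by auto
  with \<open>finite R\<close> have max: "norm b \<le> norm b0" if "b \<in> R" for b
    using that by simp
  have "b0 \<noteq> 0"
    using b0 scaled_bessel_root_simple(1) unfolding R_def scaled_bessel_roots_def by blast
  have "n \<ge> 1"
    using b0 card_scaled_bessel_roots[of n] finite_scaled_bessel_roots[of n] unfolding R_def
    by (metis card_0_eq empty_iff less_one not_le)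
  have "(real n - 1) / 2 = (\<Sum>b\<in>R - {b0}. 1/2)"
    using b0 \<open>n \<ge> 1\<close> finite_scaled_bessel_roots[of n] card_scaled_bessel_roots[of n]
    by (simp add: R_def of_nat_diff)
  also have "\<dots> \<le> (\<Sum>b\<in>R - {b0}. Re (b0/(b0 - b)))"
    using max by (intro sum_mono Re_divide_diff_ge_half) auto
  also have "\<dots> = Re (-1 - (1/2::real) *\<^sub>R (1/b0))"
    using scaled_bessel_root_sum[of b0 n] b0 unfolding R_def
    by (simp flip: Re_sum add: scaleR_conv_of_real)
  also have "\<dots> = -1 - Re (1/b0) / 2"
    by simp
  finally have "real n + 1 \<le> - Re (1/b0)"
    by simp
  also have "\<dots> \<le> 1 / norm b0"
    using abs_Re_le_cmod[of "1/b0"] by (simp add: norm_divide)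
  finally have "norm b0 \<le> 1 / (real n + 1)"
    using \<open>b0 \<noteq> 0\<close> by (simp add: field_simps)
  then show ?thesis
    using max assms unfolding R_def by force
qed

lemma norm_poly_scaled_bessel_ge:
  assumes "1 / (real n + 1) \<le> norm u"
  shows "fact (2*n) / fact n * (norm u - 1 / (real n + 1))^n \<le> norm (poly (scaled_bessel_poly n) u)"
proof -
  have "(\<Prod>b\<in>scaled_bessel_roots n. norm u - 1 / (real n + 1)) \<le> (\<Prod>b\<in>scaled_bessel_roots n. norm (u - b))"
  proof (rule prod_mono)
    fix b assume "b \<in> scaled_bessel_roots n"
    then show "0 \<le> norm u - 1 / (real n + 1) \<and> norm u - 1 / (real n + 1) \<le> norm (u - b)"
      using assms norm_scaled_bessel_root_le norm_triangle_ineq2[of u b] by force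
  qed
  moreover have "norm (poly (scaled_bessel_poly n) u) = fact (2*n) / fact n * (\<Prod>b\<in>scaled_bessel_roots n. norm (u - b))"
    by (subst scaled_bessel_poly_factor)
       (simp add: poly_prod bessel_coeff_diag norm_mult prod_norm del: of_real_divide)
  ultimately show ?thesis
    by (simp add: card_scaled_bessel_roots) (intro divide_right_mono mult_left_mono, auto)
qed

definition bessel_kernel :: "nat \<Rightarrow> complex \<Rightarrow> complex" where
  "bessel_kernel n v = 1/v^2 - (\<Sum>b\<in>scaled_bessel_roots n. 1/(v + b) - 1/(v - b))"

lemma bessel_kernel_eq:
  assumes "v \<notin> scaled_bessel_roots n" "-v \<notin> scaled_bessel_roots n" "v \<noteq> 0"
  shows "bessel_kernel n v = 1 / (v^2 * poly (scaled_bessel_poly n) v * poly (scaled_bessel_poly n) (-v))"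
proof -
  define Y where "Y = poly (scaled_bessel_poly n)"
  define Y1 where "Y1 = poly (pderiv (scaled_bessel_poly n))"
  have Y: "Y v \<noteq> 0" "Y (-v) \<noteq> 0"
    using assms unfolding scaled_bessel_roots_def Y_def by auto
  have minus: "(\<Sum>b\<in>scaled_bessel_roots n. 1/(v - b)) = Y1 v / Y v"
    using poly_pderiv_scaled_bessel[OF assms(1)] Y unfolding Y_def Y1_def by (simp add: field_simps)
  have "1/(v + b) = - (1/(-v - b))" for b
    by (simp flip: divide_minus_right)
  then have plus: "(\<Sum>b\<in>scaled_bessel_roots n. 1/(v + b)) = - (Y1 (-v) / Y (-v))"
    using poly_pderiv_scaled_bessel[OF assms(2)] Y unfolding Y_def Y1_def by (simp add: sum_negf field_simps)
  have "bessel_kernel n v = 1/v^2 + Y1 (-v) / Y (-v) + Y1 v / Y v"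
    by (simp add: bessel_kernel_def sum_subtractf plus minus)
  also have "\<dots> = (v^2 * (Y1 v * Y (-v) + Y v * Y1 (-v)) + Y v * Y (-v)) / (v^2 * Y v * Y (-v))"
    using Y assms(3) by (simp add: field_simps power2_eq_square)
  finally show ?thesis
    unfolding Y_def Y1_def scaled_bessel_wronskian .
qed

lemma norm_bessel_kernel_le:
  assumes v: "1 / (real n + 1) < norm v"
  shows "norm (bessel_kernel n v) \<le> 1 / (norm v ^ 2 * (fact (2*n) / fact n * (norm v - 1 / (real n + 1))^n)^2)"
proof -
  define L where "L = fact (2*n) / fact n * (norm v - 1 / (real n + 1))^n"
  have "L > 0"
    using v by (simp add: L_def)
  have "v \<notin> scaled_bessel_roots n" "-v \<notin> scaled_bessel_roots n" "v \<noteq> 0"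
    using v norm_scaled_bessel_root_le[of v n] norm_scaled_bessel_root_le[of "-v" n] by force+
  note kernel = bessel_kernel_eq[OF this]
  have "L * L \<le> norm (poly (scaled_bessel_poly n) v) * norm (poly (scaled_bessel_poly n) (-v))"
    using norm_poly_scaled_bessel_ge[of n v] norm_poly_scaled_bessel_ge[of n "-v"] v \<open>L > 0\<close>
    unfolding L_def by (intro mult_mono) auto
  then have "norm v ^ 2 * (L * L)
      \<le> norm v ^ 2 * (norm (poly (scaled_bessel_poly n) v) * norm (poly (scaled_bessel_poly n) (-v)))"
    by (rule mult_left_mono) simp
  then have "norm v ^ 2 * L^2 \<le> norm (v^2 * poly (scaled_bessel_poly n) v * poly (scaled_bessel_poly n) (-v))"
    by (simp add: norm_mult norm_power power2_eq_square mult.assoc)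
  with \<open>L > 0\<close> \<open>v \<noteq> 0\<close> show ?thesis
    unfolding kernel L_def[symmetric] norm_divide norm_one by (intro frac_le) auto
qed

section \<open>A contour integral for r_n\<close>

lemma bessel_zeros_eq_double_image: "bessel_zeros n = (\<lambda>b. 2*b) ` scaled_bessel_roots n"
proof (rule set_eqI)
  fix a :: complex
  have "a \<in> (\<lambda>b. 2*b) ` scaled_bessel_roots n \<longleftrightarrow> a/2 \<in> scaled_bessel_roots n"
    by (auto simp: image_iff intro: bexI[of _ "a/2"])
  then show "a \<in> bessel_zeros n \<longleftrightarrow> a \<in> (\<lambda>b. 2*b) ` scaled_bessel_roots n"
    unfolding bessel_zeros_def scaled_bessel_roots_def using poly_bessel_poly_double[of n "a/2"] by simp
qed

lemma r_n_scaled_bessel_roots: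
  "r_n n f z = z * deriv f z - (\<Sum>b\<in>scaled_bessel_roots n. f ((1 - b) * z) - f ((1 + b) * z))"
  unfolding r_n_def bessel_zeros_eq_double_image by (subst sum.reindex) (auto simp: inj_on_def)

lemma has_contour_integral_kernel_circlepath:
  fixes \<phi> :: "complex \<Rightarrow> complex"
  assumes cont: "continuous_on (cball w \<rho>) \<phi>" and hol: "\<phi> holomorphic_on ball w \<rho>"
    and D: "(\<phi> has_field_derivative D) (at w)" and "0 < \<rho>"
    and B: "finite B" "\<And>b. b \<in> B \<Longrightarrow> norm b < \<rho>"
  shows "((\<lambda>u. \<phi> u * (1/(u - w)^2 - (\<Sum>b\<in>B. 1/(u - w + b) - 1/(u - w - b))))
           has_contour_integral 2 * pi * \<i> * (D - (\<Sum>b\<in>B. \<phi> (w - b) - \<phi> (w + b)))) (circlepath w \<rho>)"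
proof -
  have "w \<in> ball w \<rho>"
    using \<open>0 < \<rho>\<close> by simp
  note Cauchy_derivative = Cauchy_derivative_integral_circlepath[OF cont hol this]
  have "D = 1 / (2 * pi * \<i>) * contour_integral (circlepath w \<rho>) (\<lambda>u. \<phi> u / (u - w)^2)"
    using DERIV_unique[OF D Cauchy_derivative(2)] by simp
  then have "((\<lambda>u. \<phi> u / (u - w)^2) has_contour_integral 2 * pi * \<i> * D) (circlepath w \<rho>)"
    using has_contour_integral_integral[OF Cauchy_derivative(1)] by simp
  moreover have "((\<lambda>u. \<Sum>b\<in>B. \<phi> u / (u - (w - b)) - \<phi> u / (u - (w + b)))
      has_contour_integral (\<Sum>b\<in>B. 2 * pi * \<i> * \<phi> (w - b) - 2 * pi * \<i> * \<phi> (w + b)))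
      (circlepath w \<rho>)"
    using B Cauchy_integral_circlepath[OF cont hol]
    by (intro has_contour_integral_sum has_contour_integral_diff) auto
  ultimately have "((\<lambda>u. \<phi> u / (u - w)^2 - (\<Sum>b\<in>B. \<phi> u / (u - (w - b)) - \<phi> u / (u - (w + b))))
      has_contour_integral 2 * pi * \<i> * D - (\<Sum>b\<in>B. 2 * pi * \<i> * \<phi> (w - b) - 2 * pi * \<i> * \<phi> (w + b)))
      (circlepath w \<rho>)"
    by (rule has_contour_integral_diff)
  moreover have "u - (w - b) = u - w + b" "u - (w + b) = u - w - b" for u b :: complex
    by simp_all
  ultimately show ?thesis
    by (simp add: sum_distrib_left right_diff_distrib)
qed

lemma r_n_has_contour_integral:
  fixes f :: "complex \<Rightarrow> complex"
  assumes hol: "f holomorphic_on ball 0 1"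
    and \<rho>: "1 / (real n + 1) < \<rho>" and z: "(1 + \<rho>) * norm z < 1"
  shows "((\<lambda>u. f (u * z) * bessel_kernel n (u - 1)) has_contour_integral 2 * pi * \<i> * r_n n f z)
           (circlepath 1 \<rho>)"
proof -
  define \<phi> where "\<phi> = (\<lambda>t. f (t * z))"
  have "0 < \<rho>"
    using \<rho> by (smt (verit) divide_pos_pos of_nat_0_le_iff)
  have disk: "norm (t * z) < 1" if "t \<in> cball 1 \<rho>" for t
  proof -
    have "norm t \<le> 1 + \<rho>"
      using that norm_triangle_ineq2[of t 1] by (simp add: dist_norm norm_minus_commute)
    then show ?thesis
      using z by (simp add: norm_mult) (meson mult_right_mono norm_ge_zero order.strict_trans1)
  qed
  have "\<phi> holomorphic_on {t. norm (t * z) < 1}"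
    unfolding \<phi>_def
    by (rule holomorphic_on_compose_gen[where t="ball 0 1", unfolded comp_def])
       (auto intro!: holomorphic_intros hol)
  moreover have "cball 1 \<rho> \<subseteq> {t. norm (t * z) < 1}"
    using disk by blast
  ultimately have cont: "continuous_on (cball 1 \<rho>) \<phi>" and hol_\<phi>: "\<phi> holomorphic_on ball 1 \<rho>"
    by (metis holomorphic_on_imp_continuous_on holomorphic_on_subset,
        meson ball_subset_cball holomorphic_on_subset order_trans)
  have deriv_\<phi>: "(\<phi> has_field_derivative deriv f z * z) (at 1)"
  proof -
    have "z \<in> ball 0 1"
      using disk[of 1] \<open>0 < \<rho>\<close> by simp
    then have "(f has_field_derivative deriv f z) (at ((\<lambda>t. t * z) 1))"
      using holomorphic_derivI[OF hol open_ball] by simp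
    moreover have "((\<lambda>t. t * z) has_field_derivative z) (at 1)"
      by (auto intro!: derivative_eq_intros)
    ultimately show ?thesis
      unfolding \<phi>_def using DERIV_chain2 by fastforce
  qed
  have roots: "norm b < \<rho>" if "b \<in> scaled_bessel_roots n" for b
    using norm_scaled_bessel_root_le[OF that] \<rho> by linarith
  have "((\<lambda>u. \<phi> u * bessel_kernel n (u - 1)) has_contour_integral
      2 * pi * \<i> * (deriv f z * z - (\<Sum>b\<in>scaled_bessel_roots n. \<phi> (1 - b) - \<phi> (1 + b))))
      (circlepath 1 \<rho>)"
    unfolding bessel_kernel_def using finite_scaled_bessel_roots roots
    by (rule has_contour_integral_kernel_circlepath[OF cont hol_\<phi> deriv_\<phi> \<open>0 < \<rho>\<close>])
  moreover have "deriv f z * z - (\<Sum>b\<in>scaled_bessel_roots n. \<phi> (1 - b) - \<phi> (1 + b)) = r_n n f z"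
    by (simp add: \<phi>_def r_n_scaled_bessel_roots mult.commute)
  ultimately show ?thesis
    by (simp add: \<phi>_def)
qed

lemma norm_r_n_le:
  fixes f :: "complex \<Rightarrow> complex"
  assumes hol: "f holomorphic_on ball 0 1" and "R0 < 1"
    and M: "\<And>w. norm w \<le> R0 \<Longrightarrow> norm (f w) \<le> M"
    and \<rho>: "1 / (real n + 1) < \<rho>" and z: "(1 + \<rho>) * norm z \<le> R0"
  shows "norm (r_n n f z) \<le> M / (\<rho> * (fact (2*n) / fact n * (\<rho> - 1 / (real n + 1))^n)^2)"
proof -
  define bound where "bound = M / (\<rho>^2 * (fact (2*n) / fact n * (\<rho> - 1 / (real n + 1))^n)^2)"
  have "0 < \<rho>"
    using \<rho> by (smt (verit) divide_pos_pos of_nat_0_le_iff)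
  then have "0 \<le> M"
    using M[of 0] z by (smt (verit) mult_nonneg_nonneg norm_ge_zero norm_zero)
  then have "0 \<le> bound"
    by (simp add: bound_def)
  have integrand: "norm (f (u * z) * bessel_kernel n (u - 1)) \<le> bound" if "norm (u - 1) = \<rho>" for u
  proof -
    have "norm u \<le> 1 + \<rho>"
      using that norm_triangle_ineq2[of u 1] by simp
    then have "norm (u * z) \<le> R0"
      using z by (simp add: norm_mult) (meson mult_right_mono norm_ge_zero order_trans)
    then have "norm (f (u * z)) \<le> M"
      by (rule M)
    moreover have "norm (bessel_kernel n (u - 1))
        \<le> 1 / (\<rho>^2 * (fact (2*n) / fact n * (\<rho> - 1 / (real n + 1))^n)^2)"
      using norm_bessel_kernel_le[of n "u - 1"] that \<rho> by simp
    ultimately show ?thesis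
      unfolding bound_def norm_mult using \<open>0 \<le> M\<close>
      by (metis (no_types, lifting) mult_mono norm_ge_zero times_divide_eq_right mult.right_neutral)
  qed
  have "(1 + \<rho>) * norm z < 1"
    using z \<open>R0 < 1\<close> by linarith
  from has_contour_integral_bound_circlepath[OF r_n_has_contour_integral[OF hol \<rho> this]
      \<open>0 \<le> bound\<close> \<open>0 < \<rho>\<close> integrand]
  have "norm (2 * pi * \<i> * r_n n f z) \<le> bound * (2 * pi * \<rho>)" .
  then have "norm (r_n n f z) \<le> bound * \<rho>"
    by (simp add: norm_mult)
  also have "\<dots> = M / (\<rho> * (fact (2*n) / fact n * (\<rho> - 1 / (real n + 1))^n)^2)"
    using \<open>0 < \<rho>\<close> unfolding bound_def by (simp add: power2_eq_square)
  finally show ?thesis .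
qed

section \<open>The choice of radius\<close>

lemma inverse_power_sqrt_bounded:
  fixes \<kappa> :: real
  assumes "1 < \<kappa>"
  obtains K where "0 < K"
    and "\<And>n. 3 \<le> n \<Longrightarrow>
      0 < \<kappa> - 1 / sqrt (real n + 1) \<and> 1 / (\<kappa> - 1 / sqrt (real n + 1))^(2*n) \<le> K"
proof
  define N where "N = nat \<lceil>1 / (\<kappa> - 1)^2\<rceil>"
  show "0 < (4::real)^N"
    by simp
  fix n :: nat
  assume "3 \<le> n"
  define c where "c = \<kappa> - 1 / sqrt (real n + 1)"
  have "2 \<le> sqrt (real n + 1)"
    using \<open>3 \<le> n\<close> by (simp add: real_le_rsqrt)
  then have "1 / sqrt (real n + 1) \<le> 1/2"
    by (simp add: field_simps)
  then have "1/2 \<le> c"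
    unfolding c_def using assms by linarith
  moreover have "1 / c^(2*n) \<le> 4^N"
  proof (cases "N \<le> n")
    case True
    then have "1 / (\<kappa> - 1)^2 \<le> real n + 1"
      unfolding N_def by linarith
    then have "1 / (real n + 1) \<le> (\<kappa> - 1)^2"
      using assms by (simp add: field_simps)
    then have "sqrt (1 / (real n + 1)) \<le> \<kappa> - 1"
      using assms by (intro real_le_lsqrt) auto
    then have "1 / sqrt (real n + 1) \<le> \<kappa> - 1"
      by (simp add: real_sqrt_divide)
    then have "1 \<le> c"
      by (simp add: c_def)
    then show ?thesis
      by (simp add: order_trans[OF _ one_le_power])
  next
    case False
    have "1 / c^(2*n) \<le> 1 / (1/2)^(2*n)"
      using \<open>1/2 \<le> c\<close> by (intro divide_left_mono power_mono) auto
    also have "\<dots> = 4^n"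
      by (simp add: power_mult power_divide)
    also have "\<dots> \<le> 4^N"
      using False by (intro power_increasing) auto
    finally show ?thesis .
  qed
  ultimately show "0 < \<kappa> - 1 / sqrt (real n + 1) \<and> 1 / (\<kappa> - 1 / sqrt (real n + 1))^(2*n) \<le> 4^N"
    by (simp add: c_def)
qed

lemma circle_radius_bounds:
  fixes \<epsilon> x :: real
  assumes \<epsilon>: "0 < \<epsilon>" "\<epsilon> < 1" and x: "0 < x" "x < 1" and n: "x^2 / (1-x)^2 \<le> real n + 1"
  defines "\<rho> \<equiv> (1 - \<epsilon>/4) / ((1-\<epsilon>) * x) - 1"
    and "s \<equiv> (1-x) / x"
    and "\<kappa> \<equiv> (1 - \<epsilon>/4) * (1 - \<epsilon>/2) / (1 - \<epsilon>)"
  shows "s \<le> \<rho>" and "s / (1 - \<epsilon>/2) * (\<kappa> - 1 / sqrt (real n + 1)) \<le> \<rho> - 1 / (real n + 1)"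
proof -
  define t where "t = 1 / sqrt (real n + 1)"
  have "0 < s" "0 < t"
    using x by (simp_all add: s_def t_def)
  have "1 - \<epsilon>/2 \<noteq> 0"
    using \<epsilon> by simp
  then have \<kappa>s: "\<kappa> * s / (1 - \<epsilon>/2) = (1 - \<epsilon>/4) / (1-\<epsilon>) * s"
    by (simp add: \<kappa>_def)
  also have "\<dots> = (1 - \<epsilon>/4) * (1-x) / ((1-\<epsilon>) * x)"
    by (simp add: s_def)
  also have "\<dots> \<le> ((1 - \<epsilon>/4) - (1-\<epsilon>) * x) / ((1-\<epsilon>) * x)"
  proof (rule divide_right_mono)
    have "(1-\<epsilon>) * x \<le> (1 - \<epsilon>/4) * x"
      using \<epsilon> x by (intro mult_right_mono) auto
    then show "(1 - \<epsilon>/4) * (1-x) \<le> (1 - \<epsilon>/4) - (1-\<epsilon>) * x"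
      by (simp add: field_simps)
    show "0 \<le> (1-\<epsilon>) * x"
      using \<epsilon> x by simp
  qed
  also have "\<dots> = \<rho>"
    using \<epsilon> x by (simp add: \<rho>_def diff_divide_distrib)
  finally have \<rho>: "\<kappa> * s / (1 - \<epsilon>/2) \<le> \<rho>" .
  have "1 \<le> (1 - \<epsilon>/4) / (1-\<epsilon>)"
    using \<epsilon> by simp
  from mult_right_mono[OF this less_imp_le[OF \<open>0 < s\<close>]]
  have "s \<le> \<kappa> * s / (1 - \<epsilon>/2)"
    unfolding \<kappa>s by simp
  with \<rho> show "s \<le> \<rho>"
    by linarith
  have "1 / s \<le> sqrt (real n + 1)"
    using n x by (simp add: s_def real_le_rsqrt power_divide)
  then have "t \<le> s"
    using \<open>0 < s\<close> by (simp add: t_def field_simps)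
  then have "t * t \<le> t * s"
    using \<open>0 < t\<close> by (simp add: mult_left_mono)
  moreover have "t * t = 1 / (real n + 1)"
    unfolding t_def by (simp flip: power2_eq_square add: power_divide)
  ultimately have "1 / (real n + 1) \<le> t * s"
    by simp
  also have "\<dots> \<le> t * s / (1 - \<epsilon>/2)"
    using \<epsilon> \<open>0 < s\<close> \<open>0 < t\<close> by (simp add: field_simps mult_le_cancel_left1)
  finally show "s / (1 - \<epsilon>/2) * (\<kappa> - t) \<le> \<rho> - 1 / (real n + 1)"
    using \<rho> by (simp add: algebra_simps diff_divide_distrib)
qed

lemma circle_estimate_le_majorant:
  fixes M K \<rho> B c e x :: real
  assumes "0 \<le> M" "0 < x" "x < 1" "0 < e" "0 < c" "1 / c^(2*n) \<le> K"
    and "(1-x) / x \<le> \<rho>" "(1-x) / x / e * c \<le> \<rho> - B"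
  shows "M / (\<rho> * (fact (2*n) / fact n * (\<rho> - B)^n)^2)
           \<le> M * K * (e^(2*n) * x^(2*n+1) / (1-x)^(2*n+2)) * ((fact n)^2 / (fact (2*n))^2)"
proof -
  define s where "s = (1-x) / x"
  define A :: real where "A = fact (2*n) / fact n"
  have "0 < s" "0 < A" "0 < s / e * c"
    using assms by (simp_all add: s_def A_def)
  have le: "s * (A * (s / e * c)^n)^2 \<le> \<rho> * (A * (\<rho> - B)^n)^2"
    using assms \<open>0 < s\<close> \<open>0 < A\<close> \<open>0 < s / e * c\<close> unfolding s_def[symmetric]
    by (intro mult_mono power_mono mult_left_mono) auto
  have pos: "0 < s * (A * (s / e * c)^n)^2"
    using \<open>0 < s\<close> \<open>0 < A\<close> assms(4,5) by (intro mult_pos_pos zero_less_power) auto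
  have "M / (\<rho> * (A * (\<rho> - B)^n)^2) \<le> M / (s * (A * (s / e * c)^n)^2)"
    by (rule divide_left_mono[OF le assms(1) mult_pos_pos[OF order.strict_trans2[OF pos le] pos]])
  also have "\<dots> = M * (1 / c^(2*n)) * (e^(2*n) / (s^(2*n+1) * A^2))"
    using \<open>0 < s\<close> \<open>0 < A\<close> assms(4,5)
    by (simp add: power_mult_distrib power_divide power_mult[symmetric] mult.commute[of 2 n] field_simps)
  also have "\<dots> \<le> M * K * (e^(2*n) / (s^(2*n+1) * A^2))"
    using assms(1,6) \<open>0 < s\<close> \<open>0 < A\<close> by (intro mult_right_mono mult_left_mono) auto
  also have "\<dots> \<le> M * K * (e^(2*n) / (s^(2*n+1) * A^2)) / (1-x)"
  proof -
    have "0 \<le> K"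
      using assms(5) order_trans[OF _ assms(6), of 0] by simp
    then have "0 \<le> M * K * (e^(2*n) / (s^(2*n+1) * A^2))"
      using assms(1,4) \<open>0 < s\<close> \<open>0 < A\<close> by (intro mult_nonneg_nonneg divide_nonneg_nonneg) auto
    moreover have "y \<le> y / (1-x)" if "0 \<le> y" for y :: real
      using that assms(2,3) by (simp add: le_divide_eq mult_left_le)
    ultimately show ?thesis
      by blast
  qed
  also have "\<dots> = M * K * (e^(2*n) * x^(2*n+1) / (1-x)^(2*n+2)) * ((fact n)^2 / (fact (2*n))^2)"
  proof -
    have powers: "s^(2*n+1) = (1-x)^(2*n+1) / x^(2*n+1)" "A^2 = (fact (2*n))^2 / (fact n)^2"
      "(1-x)^(2*n+2) = (1-x)^(2*n+1) * (1-x)"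
      by (simp_all add: s_def A_def power_divide)
    have "x \<noteq> 0" "1 - x \<noteq> 0" "(fact n :: real) \<noteq> 0" "(fact (2*n) :: real) \<noteq> 0"
      using assms(2,3) by auto
    then show ?thesis
      unfolding powers by (simp add: field_simps)
  qed
  finally show ?thesis
    by (simp add: A_def)
qed

lemma holomorphic_on_ball_bounded_on_cball:
  fixes f :: "complex \<Rightarrow> complex"
  assumes "f holomorphic_on ball 0 1" "r < 1"
  obtains M where "0 < M" "\<And>w. norm w \<le> r \<Longrightarrow> norm (f w) \<le> M"
proof -
  have "cball 0 r \<subseteq> ball 0 1"
    using assms(2) by auto
  then have "continuous_on (cball 0 r) f"
    using assms(1) holomorphic_on_imp_continuous_on holomorphic_on_subset by blast
  then have "bounded (f ` cball 0 r)"
    by (intro compact_imp_bounded compact_continuous_image) auto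
  then show ?thesis
    using that bounded_pos by (metis image_eqI mem_cball_0)
qed

lemma norm_r_n_le_majorant:
  fixes f :: "complex \<Rightarrow> complex" and \<epsilon> x :: real
  assumes hol: "f holomorphic_on ball 0 1" and \<epsilon>: "0 < \<epsilon>" "\<epsilon> < 1"
    and M: "0 \<le> M" "\<And>w. norm w \<le> 1 - \<epsilon>/4 \<Longrightarrow> norm (f w) \<le> M"
    and x: "0 < x" "x < 1" and n: "x^2 / (1-x)^2 \<le> real n + 1" and z: "norm z \<le> (1 - \<epsilon>) * x"
    and c: "0 < (1 - \<epsilon>/4) * (1 - \<epsilon>/2) / (1 - \<epsilon>) - 1 / sqrt (real n + 1)"
      "1 / ((1 - \<epsilon>/4) * (1 - \<epsilon>/2) / (1 - \<epsilon>) - 1 / sqrt (real n + 1))^(2*n) \<le> K"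
  shows "norm (r_n n f z) \<le> M * K * ((1 - \<epsilon>/2) ^ (2*n) * x ^ (2*n+1) / (1 - x) ^ (2*n+2))
                                 * ((fact n)^2 / (fact (2*n))^2)"
proof -
  define \<rho> where "\<rho> = (1 - \<epsilon>/4) / ((1-\<epsilon>) * x) - 1"
  note radius = circle_radius_bounds[OF \<epsilon> x n, folded \<rho>_def]
  have "0 < (1-x) / x / (1 - \<epsilon>/2) * ((1 - \<epsilon>/4) * (1 - \<epsilon>/2) / (1 - \<epsilon>) - 1 / sqrt (real n + 1))"
    using x \<epsilon> c by simp
  then have "1 / (real n + 1) < \<rho>"
    using radius(2) by linarith
  moreover have "(1 + \<rho>) * norm z \<le> 1 - \<epsilon>/4"
  proof -
    have "(1 + \<rho>) * norm z = (1 - \<epsilon>/4) / ((1-\<epsilon>) * x) * norm z"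
      by (simp add: \<rho>_def)
    also have "\<dots> \<le> (1 - \<epsilon>/4) / ((1-\<epsilon>) * x) * ((1-\<epsilon>) * x)"
      using z x \<epsilon> by (intro mult_left_mono) auto
    also have "\<dots> = 1 - \<epsilon>/4"
      using x \<epsilon> by simp
    finally show ?thesis .
  qed
  ultimately have "norm (r_n n f z) \<le> M / (\<rho> * (fact (2*n) / fact n * (\<rho> - 1 / (real n + 1))^n)^2)"
    using \<epsilon> by (intro norm_r_n_le[OF hol _ M(2)]) auto
  also have "\<dots> \<le> M * K * ((1 - \<epsilon>/2) ^ (2*n) * x ^ (2*n+1) / (1 - x) ^ (2*n+2))
                        * ((fact n)^2 / (fact (2*n))^2)"
    using M(1) x \<epsilon> c radius by (intro circle_estimate_le_majorant) auto
  finally show ?thesis .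
qed

theorem theorem2:
  fixes f :: "complex \<Rightarrow> complex" and \<epsilon> :: real
  assumes "f holomorphic_on ball 0 1"
    and "0 < \<epsilon>" and "\<epsilon> < 1"
  shows "\<exists>C>0. \<forall>x::real. \<forall>n::nat. \<forall>z::complex.
           0 < x \<longrightarrow> x < 1 \<longrightarrow> real n \<ge> n0 x \<longrightarrow> norm z \<le> (1 - \<epsilon>) * x \<longrightarrow>
           norm (r_n n f z) \<le> C * ((1 - \<epsilon>/2) ^ (2*n) * x ^ (2*n+1) / (1 - x) ^ (2*n+2))
                                 * ((fact n)^2 / (fact (2*n))^2)"
proof -
  have "1 < (1 - \<epsilon>/4) * (1 - \<epsilon>/2) / (1 - \<epsilon>)"
    using assms(2,3) by (simp add: field_simps power2_eq_square) (smt (verit) mult_pos_pos)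
  then obtain K where K: "0 < K" "\<And>n. 3 \<le> n \<Longrightarrow>
      0 < (1 - \<epsilon>/4) * (1 - \<epsilon>/2) / (1 - \<epsilon>) - 1 / sqrt (real n + 1) \<and>
      1 / ((1 - \<epsilon>/4) * (1 - \<epsilon>/2) / (1 - \<epsilon>) - 1 / sqrt (real n + 1))^(2*n) \<le> K"
    using inverse_power_sqrt_bounded by blast
  obtain M where M: "0 < M" "\<And>w. norm w \<le> 1 - \<epsilon>/4 \<Longrightarrow> norm (f w) \<le> M"
    using holomorphic_on_ball_bounded_on_cball[OF assms(1), of "1 - \<epsilon>/4"] assms(2) by auto
  show ?thesis
  proof (intro exI[of _ "M * K"] conjI allI impI)
    show "0 < M * K"
      using M K by simp
    fix x :: real and n :: nat and z :: complex
    assume "0 < x" "x < 1" "n0 x \<le> real n" "norm z \<le> (1 - \<epsilon>) * x"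
    moreover from this have "3 \<le> n" "x^2 / (1-x)^2 \<le> real n + 1"
      by (auto simp: n0_def)
    ultimately show "norm (r_n n f z) \<le> M * K * ((1 - \<epsilon>/2) ^ (2*n) * x ^ (2*n+1) / (1 - x) ^ (2*n+2))
                                 * ((fact n)^2 / (fact (2*n))^2)"
      using K(2)[of n] M assms by (intro norm_r_n_le_majorant) auto
  qed
qed

end
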